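(* Let $h>0$ and let $f:\mathbb R\to\mathbb R$ be a compactly supported $C^1$ function whose restriction to each interval $(ih,(i+1)h)$, $i\in\mathbb Z$, is a polynomial of degree at most $5$. Then $$\int_{\mathbb R} f(t)\,dt=\sum_{i\in\mathbb Z} h\Big(\tfrac{7}{15}\,f(ih)+\tfrac{8}{15}\,f\big(\tfrac{2i+1}{2}h\big)\Big).$$
   Context: This is the exact quadrature rule for $C^1$ quintic splines with uniform knots $h\mathbb Z$ on the whole real line (two nodes per subinterval: the knots and the midpoints). *)

theory Defs
  imports "HOL-Analysis.Analysis"
begin

definition C1_real :: "(real \<Rightarrow> real) \<Rightarrow> bool" where
  "C1_real f \<longleftrightarrow> (\<exists>f'. (\<forall>x. (f has_real_derivative f' x) (at x)) \<and> continuous_on UNIV f')"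

definition compact_support :: "(real \<Rightarrow> real) \<Rightarrow> bool" where
  "compact_support f \<longleftrightarrow> compact (closure {t. f t \<noteq> 0})"

definition piecewise_quintic :: "real \<Rightarrow> (real \<Rightarrow> real) \<Rightarrow> bool" where
  "piecewise_quintic h f \<longleftrightarrow>
     (\<forall>i::int. \<exists>c::nat \<Rightarrow> real. \<forall>t \<in> {of_int i * h <..< of_int (i + 1) * h}.
         f t = (\<Sum>k\<le>5. c k * t ^ k))"

end

theory Submission
  imports Defs
begin

text \<open>
  On a cell [a, a + h] the Hermite-corrected Simpson rule
  h (7/30 f(a) + 8/15 f(a + h/2) + 7/30 f(a + h)) + h^2/60 (f'(a) - f'(a + h))
  is exact for polynomials of degree at most 5, as one checks on monomials.
  Because f is C^1, on each closed cell f and f' coincide with the polynomial piece and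
  its derivative, so the rule applies cell by cell. Summing over the finitely many cells
  that meet the support, the derivative corrections telescope to zero and the two weights
  7/30 meeting at each knot add up to 7/15.
\<close>

definition corrected_simpson :: "real \<Rightarrow> (real \<Rightarrow> real) \<Rightarrow> (real \<Rightarrow> real) \<Rightarrow> real \<Rightarrow> real" where
  "corrected_simpson h f f' a =
     h * (7/30 * f a + 8/15 * f (a + h/2) + 7/30 * f (a + h)) + h^2/60 * (f' a - f' (a + h))"

lemma corrected_simpson_sum:
  "corrected_simpson h (\<lambda>t. \<Sum>k\<in>K. c k * u k t) (\<lambda>t. \<Sum>k\<in>K. c k * v k t) a =
     (\<Sum>k\<in>K. c k * corrected_simpson h (u k) (v k) a)"
  unfolding corrected_simpson_def sum_distrib_left sum_subtractf[symmetric] sum.distrib[symmetric]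
  by (intro sum.cong refl) (simp add: field_simps)

lemma corrected_simpson_monomial:
  assumes "k \<le> 5"
  shows "((a + h) ^ Suc k - a ^ Suc k) / Suc k = corrected_simpson h (\<lambda>t. t ^ k) (\<lambda>t. k * t ^ (k - 1)) a"
proof -
  have "k \<in> {0, 1, 2, 3, 4, 5}" using assms by auto
  then show ?thesis
    unfolding corrected_simpson_def by (auto simp: field_simps power_numeral_reduce)
qed

lemma has_integral_quintic_corrected_simpson:
  fixes a h :: real and c :: "nat \<Rightarrow> real"
  assumes "h \<ge> 0"
  shows "((\<lambda>t. \<Sum>k\<le>5. c k * t ^ k) has_integral
    corrected_simpson h (\<lambda>t. \<Sum>k\<le>5. c k * t ^ k) (\<lambda>t. \<Sum>k\<le>5. c k * (k * t ^ (k - 1))) a) {a..a + h}"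
proof -
  define P where "P t = (\<Sum>k\<le>5. c k * (t ^ Suc k / Suc k))" for t :: real
  have monomial: "((\<lambda>t::real. t ^ Suc k / Suc k) has_real_derivative t ^ k) (at t)" for k t
    by (rule DERIV_cong[OF DERIV_cdivide[OF DERIV_pow]]) (simp del: of_nat_Suc)
  have "(P has_real_derivative (\<Sum>k\<le>5. c k * t ^ k)) (at t)" for t
    unfolding P_def by (intro DERIV_sum DERIV_cmult monomial)
  then have "((\<lambda>t. \<Sum>k\<le>5. c k * t ^ k) has_integral P (a + h) - P a) {a..a + h}"
    using assms by (intro fundamental_theorem_of_calculus)
      (auto simp: has_real_derivative_iff_has_vector_derivative[symmetric] intro: has_field_derivative_at_within)
  moreover have "P (a + h) - P a = (\<Sum>k\<le>5. c k * (((a + h) ^ Suc k - a ^ Suc k) / Suc k))"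
    unfolding P_def by (simp add: sum_subtractf[symmetric] algebra_simps diff_divide_distrib)
  moreover have "\<dots> = (\<Sum>k\<le>5. c k * corrected_simpson h (\<lambda>t. t ^ k) (\<lambda>t. k * t ^ (k - 1)) a)"
    by (intro sum.cong refl, subst corrected_simpson_monomial) auto
  ultimately show ?thesis
    by (simp only: corrected_simpson_sum)
qed

lemma continuous_eq_on_closure:
  fixes f g :: "'a::topological_space \<Rightarrow> 'b::t2_space"
  assumes "continuous_on UNIV f" "continuous_on UNIV g"
    and "\<And>x. x \<in> S \<Longrightarrow> f x = g x" and "x \<in> closure S"
  shows "f x = g x"
proof -
  have "closure S \<subseteq> {x. f x = g x}"
    using assms(1-3) by (intro closure_minimal closed_Collect_eq) auto
  then show ?thesis using assms(4) by blast
qed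

lemma DERIV_unique_on_open:
  assumes "(f has_real_derivative D) (at x)" "(g has_real_derivative E) (at x)"
    and "open S" "x \<in> S" "\<And>y. y \<in> S \<Longrightarrow> f y = g y"
  shows "D = E"
  using has_field_derivative_transform_within_open[OF assms(1,3,4,5)] assms(2) DERIV_unique
  by blast

lemma C1_quintic_cell_has_integral:
  fixes f f' :: "real \<Rightarrow> real" and c :: "nat \<Rightarrow> real"
  assumes "h > 0"
    and f': "\<And>x. (f has_real_derivative f' x) (at x)" "continuous_on UNIV f'"
    and quintic: "\<forall>t\<in>{a<..<a + h}. f t = (\<Sum>k\<le>5. c k * t ^ k)"
  shows "(f has_integral corrected_simpson h f f' a) {a..a + h}"
proof -
  define p where "p t = (\<Sum>k\<le>5. c k * t ^ k)" for t :: real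
  define p' where "p' t = (\<Sum>k\<le>5. c k * (k * t ^ (k - 1)))" for t :: real
  have p': "(p has_real_derivative p' t) (at t)" for t
    unfolding p_def p'_def using DERIV_pow by (intro DERIV_sum DERIV_cmult) simp
  have closure_cell: "closure {a<..<a + h} = {a..a + h}"
    using assms(1) by simp
  have cont: "continuous_on UNIV f" "continuous_on UNIV p" "continuous_on UNIV p'"
    using DERIV_isCont[OF f'(1)] DERIV_isCont[OF p']
    by (auto intro!: continuous_at_imp_continuous_on simp: p'_def)
  have f_eq: "f t = p t" if "t \<in> {a..a + h}" for t
  proof (rule continuous_eq_on_closure[OF cont(1,2)])
    show "f x = p x" if "x \<in> {a<..<a + h}" for x
      using quintic that by (simp add: p_def)
  qed (use that closure_cell in simp)
  have f'_eq: "f' t = p' t" if "t \<in> {a..a + h}" for t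
  proof (rule continuous_eq_on_closure[OF f'(2) cont(3)])
    show "f' x = p' x" if "x \<in> {a<..<a + h}" for x
      by (rule DERIV_unique_on_open[OF f'(1) p' open_greaterThanLessThan that]) (simp add: quintic p_def)
  qed (use that closure_cell in simp)
  have "(p has_integral corrected_simpson h p p' a) {a..a + h}"
    unfolding p_def p'_def using assms(1) by (intro has_integral_quintic_corrected_simpson) simp
  also have "corrected_simpson h p p' a = corrected_simpson h f f' a"
    unfolding corrected_simpson_def using f_eq f'_eq assms(1) by simp
  finally show ?thesis
    by (rule has_integral_eq[rotated]) (simp add: f_eq)
qed

lemma has_integral_consecutive_cells:
  fixes f :: "real \<Rightarrow> 'a::banach" and h :: real
  assumes "h \<ge> 0" "m \<le> n"
    and "\<And>i. m \<le> i \<Longrightarrow> i < n \<Longrightarrow> (f has_integral I i) {of_int i * h..of_int (i + 1) * h}"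
  shows "(f has_integral (\<Sum>i\<in>{m..<n}. I i)) {of_int m * h..of_int n * h}"
  using assms(2,3)
proof (induction n rule: int_ge_induct)
  case base
  then show ?case by (simp add: has_integral_refl(2))
next
  case (step n)
  have "of_int m * h \<le> of_int n * h" "of_int n * h \<le> of_int (n + 1) * h"
    using step.hyps assms(1) by (simp_all add: mult_right_mono)
  moreover have "(f has_integral (\<Sum>i\<in>{m..<n}. I i)) {of_int m * h..of_int n * h}"
    using step.IH step.prems by simp
  moreover have "(f has_integral I n) {of_int n * h..of_int (n + 1) * h}"
    using step.prems step.hyps by simp
  ultimately have "(f has_integral (\<Sum>i\<in>{m..<n}. I i) + I n) {of_int m * h..of_int (n + 1) * h}"
    by (rule has_integral_combine)
  moreover have "{m..<n + 1} = insert n {m..<n}"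
    using step.hyps by auto
  ultimately show ?case
    by (simp add: add.commute)
qed

lemma sum_int_telescope:
  fixes F :: "int \<Rightarrow> 'a::ab_group_add"
  assumes "m \<le> n"
  shows "(\<Sum>i\<in>{m..<n}. F (i + 1) - F i) = F n - F m"
  using assms
proof (induction n rule: int_ge_induct)
  case (step n)
  then have "{m..<n + 1} = insert n {m..<n}" by auto
  with step show ?case by simp
qed simp

lemma composite_corrected_simpson:
  fixes f f' :: "real \<Rightarrow> real"
  assumes "h > 0" "m \<le> n"
    and f': "\<And>x. (f has_real_derivative f' x) (at x)" "continuous_on UNIV f'"
    and "piecewise_quintic h f"
  shows "(f has_integral
      (\<Sum>i\<in>{m..<n}. h * (7/15 * f (of_int i * h) + 8/15 * f ((2 * of_int i + 1) / 2 * h)))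
      + 7/30 * h * (f (of_int n * h) - f (of_int m * h))
      - h^2/60 * (f' (of_int n * h) - f' (of_int m * h))) {of_int m * h..of_int n * h}"
proof -
  define x where "x i = of_int i * h" for i :: int
  define Q where "Q i = h * (7/15 * f (x i) + 8/15 * f ((2 * of_int i + 1) / 2 * h))" for i
  have x_succ: "x (i + 1) = x i + h" and midpoint: "(2 * of_int i + 1) / 2 * h = x i + h/2" for i
    unfolding x_def by (simp_all add: algebra_simps)
  have "(f has_integral
      Q i + 7/30 * h * (f (x (i + 1)) - f (x i)) - h^2/60 * (f' (x (i + 1)) - f' (x i))) {x i..x (i + 1)}"
    for i
  proof -
    obtain c where "\<forall>t\<in>{x i<..<x i + h}. f t = (\<Sum>k\<le>5. c k * t ^ k)"
      using assms(5) x_succ unfolding piecewise_quintic_def x_def by metis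
    from C1_quintic_cell_has_integral[OF assms(1) f' this] show ?thesis
      unfolding Q_def x_succ midpoint corrected_simpson_def by (rule has_integral_eq_rhs) (simp add: field_simps)
  qed
  then have "(f has_integral (\<Sum>i\<in>{m..<n}.
      Q i + 7/30 * h * (f (x (i + 1)) - f (x i)) - h^2/60 * (f' (x (i + 1)) - f' (x i)))) {x m..x n}"
    unfolding x_def using assms(1,2) by (intro has_integral_consecutive_cells) auto
  moreover have "(\<Sum>i\<in>{m..<n}.
      Q i + 7/30 * h * (f (x (i + 1)) - f (x i)) - h^2/60 * (f' (x (i + 1)) - f' (x i)))
    = (\<Sum>i\<in>{m..<n}. Q i) + 7/30 * h * (f (x n) - f (x m)) - h^2/60 * (f' (x n) - f' (x m))"
    using sum_int_telescope[OF assms(2), of "\<lambda>i. f (x i)"] sum_int_telescope[OF assms(2), of "\<lambda>i. f' (x i)"]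
    by (simp only: sum.distrib sum_subtractf sum_distrib_left[symmetric])
  ultimately show ?thesis
    unfolding Q_def x_def by simp
qed

lemma compact_support_vanishes_outside:
  assumes "compact_support f"
  obtains M where "\<And>t. M < \<bar>t\<bar> \<Longrightarrow> f t = 0"
proof -
  have "bounded (closure {t. f t \<noteq> 0})"
    using assms unfolding compact_support_def by (rule compact_imp_bounded)
  then obtain M where M: "\<And>t. t \<in> closure {t. f t \<noteq> 0} \<Longrightarrow> \<bar>t\<bar> \<le> M"
    unfolding bounded_iff real_norm_def by blast
  show ?thesis
  proof (rule that)
    fix t :: real
    assume "M < \<bar>t\<bar>"
    then have "t \<notin> closure {t. f t \<noteq> 0}"
      using M by (meson not_le)
    then show "f t = 0"
      using closure_subset by (metis (mono_tags) mem_Collect_eq subsetD)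
  qed
qed

lemma grid_nodes_outside:
  fixes h :: real
  assumes "h \<ge> 0" "i \<notin> {- int N..<int N}"
  shows "real N * h \<le> \<bar>of_int i * h\<bar>" "real N * h \<le> \<bar>(2 * of_int i + 1) / 2 * h\<bar>"
proof -
  have "real N \<le> \<bar>of_int i\<bar>" "real N \<le> \<bar>(2 * of_int i + 1) / 2\<bar>"
    using assms(2) by auto
  from mult_right_mono[OF this(1) assms(1)] mult_right_mono[OF this(2) assms(1)]
  show "real N * h \<le> \<bar>of_int i * h\<bar>" "real N * h \<le> \<bar>(2 * of_int i + 1) / 2 * h\<bar>"
    by (simp_all only: abs_mult abs_of_nonneg[OF assms(1)])
qed

lemma C1_compact_support_vanishes_outside:
  fixes f f' :: "real \<Rightarrow> real"
  assumes "compact_support f" "\<And>x. (f has_real_derivative f' x) (at x)" "h > 0"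
  obtains N :: nat where "\<And>t. real N * h \<le> \<bar>t\<bar> \<Longrightarrow> f t = 0 \<and> f' t = 0"
proof -
  obtain M where f_zero: "\<And>t. M < \<bar>t\<bar> \<Longrightarrow> f t = 0"
    using compact_support_vanishes_outside assms(1) by blast
  have "open {t::real. M < \<bar>t\<bar>}"
    by (intro open_Collect_less continuous_intros)
  then have f'_zero: "f' t = 0" if "M < \<bar>t\<bar>" for t
    using that f_zero by (intro DERIV_unique_on_open[OF assms(2) DERIV_const]) auto
  obtain N :: nat where "M / h < real N"
    using reals_Archimedean2 by blast
  then have "M < real N * h"
    using assms(3) by (simp add: field_simps)
  show ?thesis
  proof (rule that)
    fix t :: real
    assume "real N * h \<le> \<bar>t\<bar>"
    with \<open>M < real N * h\<close> have "M < \<bar>t\<bar>" by linarith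
    then show "f t = 0 \<and> f' t = 0"
      using f_zero f'_zero by blast
  qed
qed

theorem mainTheorem7:
  fixes h :: real and f :: "real \<Rightarrow> real"
  assumes "h > 0"
    and "C1_real f"
    and "compact_support f"
    and "piecewise_quintic h f"
  shows "integral UNIV f =
    (\<Sum>\<^sub>\<infinity>i::int. h * (7/15 * f (of_int i * h) + 8/15 * f ((2 * of_int i + 1) / 2 * h)))"
proof -
  obtain f' where f': "\<And>x. (f has_real_derivative f' x) (at x)" "continuous_on UNIV f'"
    using assms(2) unfolding C1_real_def by blast
  obtain N :: nat where vanish: "\<And>t. real N * h \<le> \<bar>t\<bar> \<Longrightarrow> f t = 0 \<and> f' t = 0"
    using C1_compact_support_vanishes_outside[OF assms(3) f'(1) assms(1)] by blast
  define g where "g i = h * (7/15 * f (of_int i * h) + 8/15 * f ((2 * of_int i + 1) / 2 * h))" for i :: int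
  have on_interval: "(f has_integral (\<Sum>i\<in>{- int N..<int N}. g i)) {- real N * h..real N * h}"
    using composite_corrected_simpson[OF assms(1) _ f' assms(4), of "- int N" "int N"] vanish
    by (simp add: g_def)
  have "f t = 0" if "t \<notin> {- real N * h..real N * h}" for t
    using that vanish[of t] by auto
  then have integral: "integral UNIV f = (\<Sum>i\<in>{- int N..<int N}. g i)"
    by (rule integral_unique[OF has_integral_on_superset[OF on_interval _ subset_UNIV]])
  have "g i = 0" if "i \<notin> {- int N..<int N}" for i
    using grid_nodes_outside[OF _ that, of h] assms(1) vanish unfolding g_def by simp
  then have infsum: "(\<Sum>\<^sub>\<infinity>i. g i) = (\<Sum>i\<in>{- int N..<int N}. g i)"
    using infsum_cong_neutral[of "{- int N..<int N}" UNIV g g] by simp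
  show ?thesis
    using integral infsum unfolding g_def by simp
qed

end
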